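(* Let $\mathbb{H}$ be a real Hilbert space, $\epsilon\in[0,1)$, $T\in\mathbb{K}(\mathbb{H})$ and $A\in\mathbb{B}(\mathbb{H})$ with $M_T\subseteq M_A$. Then $T\perp_B^{\epsilon}A$ if and only if there exists $x\in M_T$ such that $Tx\perp^{\epsilon}Ax$.
   Context: $\mathbb{K}(\mathbb{H})$ and $\mathbb{B}(\mathbb{H})$ denote the compact and the bounded linear operators on $\mathbb{H}$, with the operator norm. $M_T=\{x\in\mathbb{H}:\|x\|=1,\ \|Tx\|=\|T\|\}$. For $\epsilon\in[0,1)$ and $u,v$ in a normed space, $u\perp_B^{\epsilon}v$ means $\|u+\lambda v\|^2\ge\|u\|^2-2\epsilon\|u\|\|\lambda v\|$ for all $\lambda\in\mathbb{R}$. In an inner product space, $x\perp^{\epsilon}y$ means $|\langle x,y\rangle|\le\epsilon\|x\|\|y\|$. *)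

theory Defs
  imports "HOL-Analysis.Analysis"
begin

definition compact_op :: "('a::real_normed_vector \<Rightarrow>\<^sub>L 'b::real_normed_vector) \<Rightarrow> bool" where
  "compact_op T \<longleftrightarrow> compact (closure (blinfun_apply T ` ball 0 1))"

definition norm_attain :: "('a::real_normed_vector \<Rightarrow>\<^sub>L 'b::real_normed_vector) \<Rightarrow> 'a set" where
  "norm_attain T = {x. norm x = 1 \<and> norm (blinfun_apply T x) = norm T}"

definition bj_eps_orth :: "real \<Rightarrow> 'v::real_normed_vector \<Rightarrow> 'v \<Rightarrow> bool" where
  "bj_eps_orth eps u v \<longleftrightarrow>
     (\<forall>t::real. (norm (u + t *\<^sub>R v))^2 \<ge> (norm u)^2 - 2 * eps * norm u * norm (t *\<^sub>R v))"

definition inner_eps_orth :: "real \<Rightarrow> 'v::real_inner \<Rightarrow> 'v \<Rightarrow> bool" where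
  "inner_eps_orth eps x y \<longleftrightarrow> \<bar>inner x y\<bar> \<le> eps * norm x * norm y"

end

theory Submission
  imports Defs
begin

text \<open>The vectors \<open>x\<close> with \<open>\<parallel>Tx\<parallel> = \<parallel>T\<parallel>\<parallel>x\<parallel>\<close> form a subspace, on which \<open>x \<mapsto> \<langle>Tx, Ax\<rangle>\<close>
  is a continuous quadratic form; by the intermediate value theorem it therefore suffices to find
  points of \<open>M\<^sub>T\<close> where it is \<open>\<ge> -\<epsilon>\<parallel>T\<parallel>\<parallel>A\<parallel>\<close>, resp. \<open>\<le> \<epsilon>\<parallel>T\<parallel>\<parallel>A\<parallel>\<close>, and then use
  \<open>M\<^sub>T \<subseteq> M\<^sub>A\<close>. For the first (the second follows with \<open>-A\<close>), take unit vectors \<open>x\<^sub>n\<close> almost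
  norming \<open>T + t\<^sub>nA\<close> with \<open>t\<^sub>n \<rightarrow> 0\<close>: expanding \<open>\<parallel>(T + t\<^sub>nA)x\<^sub>n\<parallel>\<^sup>2\<close> against
  \<open>T \<perp>\<^sub>B\<^sup>\<epsilon> A\<close> shows \<open>\<parallel>Tx\<^sub>n\<parallel> \<rightarrow> \<parallel>T\<parallel>\<close> and the desired bound up to \<open>O(t\<^sub>n)\<close>. Compactness of
  \<open>T\<close> makes \<open>Tx\<^sub>n\<close> converge along a subsequence, and the parallelogram law then makes that
  subsequence of \<open>x\<^sub>n\<close> Cauchy; its limit lies in \<open>M\<^sub>T\<close>. The converse is a direct expansion of
  \<open>\<parallel>(T + tA)x\<parallel>\<^sup>2\<close> at a common norming vector \<open>x \<in> M\<^sub>T \<subseteq> M\<^sub>A\<close>.\<close>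

lemma power2_norm_add:
  "(norm (x + y :: 'a::real_inner))\<^sup>2 = (norm x)\<^sup>2 + 2 * inner x y + (norm y)\<^sup>2"
  by (simp add: power2_norm_eq_inner inner_add_left inner_add_right inner_commute)

lemma parallelogram_law:
  "(norm (x + y :: 'a::real_inner))\<^sup>2 + (norm (x - y))\<^sup>2 = 2 * (norm x)\<^sup>2 + 2 * (norm y)\<^sup>2"
  by (simp add: power2_norm_eq_inner inner_add_left inner_add_right inner_diff_left inner_diff_right)

lemma power2_norm_blinfun_add_scaleR:
  fixes T A :: "'a::real_normed_vector \<Rightarrow>\<^sub>L 'b::real_inner"
  shows "(norm ((T + t *\<^sub>R A) x))\<^sup>2 = (norm (T x))\<^sup>2 + 2 * t * inner (T x) (A x) + t\<^sup>2 * (norm (A x))\<^sup>2"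
  by (simp add: plus_blinfun.rep_eq scaleR_blinfun.rep_eq power2_norm_add power_mult_distrib)

lemma power2_norm_blinfun_le: "(norm (blinfun_apply T x))\<^sup>2 \<le> (norm T * norm x)\<^sup>2"
  by (simp add: norm_blinfun power_mono)

text \<open>Equality in the parallelogram law for \<open>T\<close> forces equality in each of the two
  estimates \<open>\<parallel>T(x \<plusminus> y)\<parallel> \<le> \<parallel>T\<parallel>\<parallel>x \<plusminus> y\<parallel>\<close>.\<close>
lemma subspace_norm_attaining:
  fixes T :: "'a::real_inner \<Rightarrow>\<^sub>L 'b::real_inner"
  shows "subspace {x. norm (T x) = norm T * norm x}"
  unfolding subspace_def
proof (intro conjI ballI allI)
  fix x y assume "x \<in> {x. norm (T x) = norm T * norm x}" "y \<in> {x. norm (T x) = norm T * norm x}"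
  then have x: "norm (T x) = norm T * norm x" and y: "norm (T y) = norm T * norm y" by auto
  have "(norm (T (x + y)))\<^sup>2 + (norm (T (x - y)))\<^sup>2 = 2 * (norm (T x))\<^sup>2 + 2 * (norm (T y))\<^sup>2"
    by (simp add: blinfun.add_right blinfun.diff_right parallelogram_law)
  also have "\<dots> = (norm T)\<^sup>2 * ((norm (x + y))\<^sup>2 + (norm (x - y))\<^sup>2)"
    unfolding parallelogram_law by (simp add: x y power_mult_distrib algebra_simps)
  finally have "(norm (T (x + y)))\<^sup>2 = (norm T * norm (x + y))\<^sup>2"
    using power2_norm_blinfun_le[of T "x + y"] power2_norm_blinfun_le[of T "x - y"]
    by (simp add: power_mult_distrib algebra_simps)
  then show "x + y \<in> {x. norm (T x) = norm T * norm x}"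
    by (simp add: power2_eq_iff_nonneg)
qed (auto simp: blinfun.scaleR_right)

lemma normalize_mem_norm_attain:
  fixes T :: "'a::real_normed_vector \<Rightarrow>\<^sub>L 'b::real_normed_vector"
  assumes "norm (T x) = norm T * norm x" and "x \<noteq> 0"
  shows "x /\<^sub>R norm x \<in> norm_attain T"
  using assms by (simp add: norm_attain_def blinfun.scaleR_right)

lemma exists_unit_almost_norming:
  fixes B :: "'a::real_normed_vector \<Rightarrow>\<^sub>L 'b::real_normed_vector"
  assumes nontriv: "\<exists>x::'a. x \<noteq> 0" and "\<delta> > 0"
  shows "\<exists>x. norm x = 1 \<and> (norm B)\<^sup>2 - \<delta> < (norm (B x))\<^sup>2"
proof (rule ccontr)
  assume "\<not> ?thesis"
  then have small: "(norm (B x))\<^sup>2 \<le> (norm B)\<^sup>2 - \<delta>" if "norm x = 1" for x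
    using that by force
  obtain x0 :: 'a where "x0 \<noteq> 0" using nontriv by blast
  then have "(norm (B (x0 /\<^sub>R norm x0)))\<^sup>2 \<le> (norm B)\<^sup>2 - \<delta>"
    by (intro small) simp
  then have nonneg: "0 \<le> (norm B)\<^sup>2 - \<delta>"
    by (smt (verit) zero_le_power2[of "norm (B (x0 /\<^sub>R norm x0))"])
  define c where "c = sqrt ((norm B)\<^sup>2 - \<delta>)"
  have "norm B \<le> c"
  proof (rule norm_blinfun_bound)
    show "0 \<le> c" using nonneg by (simp add: c_def)
    fix x :: 'a
    show "norm (B x) \<le> c * norm x"
    proof (cases "x = 0")
      case False
      have "norm (B (x /\<^sub>R norm x)) \<le> c"
        using small[of "x /\<^sub>R norm x"] False unfolding c_def by (simp add: real_le_rsqrt)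
      then show ?thesis using False by (simp add: blinfun.scaleR_right field_simps)
    qed simp
  qed
  then have "(norm B)\<^sup>2 \<le> (norm B)\<^sup>2 - \<delta>"
    using power_mono[OF \<open>norm B \<le> c\<close>, of 2] nonneg unfolding c_def by simp
  then show False using \<open>\<delta> > 0\<close> by simp
qed

text \<open>If \<open>Tu\<close> and \<open>Tv\<close> are both close to a vector of norm \<open>\<parallel>T\<parallel>\<close>, then \<open>\<parallel>u + v\<parallel>\<close> is close
  to \<open>2\<close>, and the parallelogram law makes \<open>u\<close> and \<open>v\<close> close.\<close>
lemma power2_norm_diff_le_of_near_norming:
  fixes T :: "'a::real_inner \<Rightarrow>\<^sub>L 'b::real_normed_vector"
  assumes u: "norm u = 1" and v: "norm v = 1" and T: "norm T > 0" and y: "norm y = norm T"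
  shows "(norm (u - v))\<^sup>2 \<le> 4 * (norm (T u - y) + norm (T v - y)) / norm T"
proof -
  define \<delta> where "\<delta> = (norm (T u - y) + norm (T v - y)) / norm T"
  have "norm T * (2 - \<delta>) = norm (2 *\<^sub>R y) - (norm (T u - y) + norm (T v - y))"
    using T y by (simp add: \<delta>_def field_simps)
  also have "\<dots> \<le> norm (T u + T v)"
  proof -
    have "2 *\<^sub>R y = (T u + T v) - ((T u - y) + (T v - y))"
      by (simp add: algebra_simps scaleR_2)
    then have "norm (2 *\<^sub>R y) \<le> norm (T u + T v) + norm ((T u - y) + (T v - y))"
      by (metis norm_triangle_ineq4)
    then show ?thesis
      using norm_triangle_ineq[of "T u - y" "T v - y"] by linarith
  qed
  also have "\<dots> \<le> norm T * norm (u + v)"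
    by (metis blinfun.add_right norm_blinfun)
  finally have "2 - \<delta> \<le> norm (u + v)" using T by simp
  then have "4 - 4 * \<delta> \<le> (norm (u + v))\<^sup>2"
  proof (cases "0 \<le> 2 - \<delta>")
    case True
    then have "(2 - \<delta>)\<^sup>2 \<le> (norm (u + v))\<^sup>2"
      using \<open>2 - \<delta> \<le> norm (u + v)\<close> by (simp add: power_mono)
    moreover have "4 - 4 * \<delta> \<le> (2 - \<delta>)\<^sup>2" by (simp add: power2_eq_square algebra_simps)
    ultimately show ?thesis by linarith
  qed (use zero_le_power2[of "norm (u + v)"] in linarith)
  moreover have "(norm (u - v))\<^sup>2 = 4 - (norm (u + v))\<^sup>2"
    using parallelogram_law[of u v] u v by simp
  ultimately show ?thesis by (simp add: \<delta>_def)
qed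

lemma norm_attain_limit_of_norming_sequence:
  fixes T :: "'a::{real_inner,complete_space} \<Rightarrow>\<^sub>L 'b::real_normed_vector"
  assumes T: "compact_op T" "norm T > 0"
    and unit: "\<And>n. norm (x n) = 1"
    and norming: "(\<lambda>n. norm (T (x n))) \<longlonglongrightarrow> norm T"
  shows "\<exists>r z. strict_mono r \<and> (x \<circ> r) \<longlonglongrightarrow> z \<and> z \<in> norm_attain T"
proof -
  let ?K = "closure (blinfun_apply T ` ball 0 1)"
  have "seq_compact ?K"
    using T(1) unfolding compact_op_def by (rule compact_imp_seq_compact)
  moreover have "\<forall>n. T ((1/2) *\<^sub>R x n) \<in> ?K"
    using unit by (intro allI closure_subset[THEN subsetD] imageI) simp
  ultimately obtain l r where r: "strict_mono r" and "((\<lambda>n. T ((1/2) *\<^sub>R x n)) \<circ> r) \<longlonglongrightarrow> l"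
    using seq_compactE by metis
  then have l: "(\<lambda>n. T ((1/2) *\<^sub>R x (r n))) \<longlonglongrightarrow> l" by (simp add: comp_def)
  define y where "y = 2 *\<^sub>R l"
  have Ty: "(\<lambda>n. T (x (r n))) \<longlonglongrightarrow> y"
    using tendsto_scaleR[OF tendsto_const[of 2] l] by (simp add: y_def blinfun.scaleR_right)
  have "(\<lambda>n. norm (T (x (r n)))) \<longlonglongrightarrow> norm T"
    using LIMSEQ_subseq_LIMSEQ[OF norming r] by (simp add: comp_def)
  then have ny: "norm y = norm T"
    using tendsto_norm[OF Ty] LIMSEQ_unique by blast
  have "Cauchy (x \<circ> r)"
  proof (rule CauchyI)
    fix e :: real assume e: "e > 0"
    define d where "d = e\<^sup>2 * norm T / 8"
    have "d > 0" using e T(2) by (simp add: d_def)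
    then obtain M where M: "\<And>n. n \<ge> M \<Longrightarrow> norm (T (x (r n)) - y) < d"
      using LIMSEQ_D[OF Ty] by blast
    have "norm (x (r m) - x (r n)) < e" if "m \<ge> M" "n \<ge> M" for m n
    proof -
      have "(norm (x (r m) - x (r n)))\<^sup>2 \<le> 4 * (norm (T (x (r m)) - y) + norm (T (x (r n)) - y)) / norm T"
        by (rule power2_norm_diff_le_of_near_norming[OF unit unit T(2) ny])
      also have "\<dots> < 4 * (d + d) / norm T"
        using M[OF that(1)] M[OF that(2)] T(2) by (simp add: divide_strict_right_mono)
      also have "\<dots> = e\<^sup>2" using T(2) by (simp add: d_def)
      finally show ?thesis using e by (simp add: power_less_imp_less_base less_imp_le)
    qed
    then show "\<exists>M. \<forall>m\<ge>M. \<forall>n\<ge>M. norm ((x \<circ> r) m - (x \<circ> r) n) < e" by auto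
  qed
  then obtain z where z: "(x \<circ> r) \<longlonglongrightarrow> z"
    using Cauchy_convergent_iff convergent_def by blast
  have "norm z = 1"
    using tendsto_norm[OF z] unit by (simp add: comp_def LIMSEQ_const_iff)
  moreover have "T z = y"
    using blinfun.tendsto[OF tendsto_const z, of T] Ty LIMSEQ_unique by (auto simp: comp_def)
  ultimately have "z \<in> norm_attain T" using ny by (simp add: norm_attain_def)
  then show ?thesis using r z by blast
qed

text \<open>At a unit vector \<open>x\<close> almost norming \<open>T + tA\<close>, expanding \<open>\<parallel>(T + tA)x\<parallel>\<^sup>2\<close> and comparing
  with \<open>\<parallel>T + tA\<parallel>\<^sup>2 \<ge> \<parallel>T\<parallel>\<^sup>2 - 2\<epsilon>t\<parallel>T\<parallel>\<parallel>A\<parallel>\<close> bounds \<open>\<langle>Tx, Ax\<rangle>\<close> and \<open>\<parallel>Tx\<parallel>\<close> from below up to \<open>O(t)\<close>.\<close>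
lemma bj_eps_orth_almost_norming_bounds:
  fixes T A :: "'a::real_normed_vector \<Rightarrow>\<^sub>L 'b::real_inner"
  assumes bj: "bj_eps_orth eps T A" and t: "0 < t"
    and x: "norm x = 1" and almost: "(norm (T + t *\<^sub>R A))\<^sup>2 - t\<^sup>2 < (norm ((T + t *\<^sub>R A) x))\<^sup>2"
  shows "- eps * norm T * norm A - t * (1 + (norm A)\<^sup>2) \<le> inner (T x) (A x)"
    and "(norm T)\<^sup>2 - t * (2 * (1 + eps) * norm T * norm A + t * (1 + (norm A)\<^sup>2)) \<le> (norm (T x))\<^sup>2"
proof -
  let ?f = "inner (T x) (A x)"
  have "(norm T)\<^sup>2 - 2 * eps * norm T * (t * norm A) \<le> (norm (T + t *\<^sub>R A))\<^sup>2"
    using bj t unfolding bj_eps_orth_def by (metis norm_scaleR abs_of_pos)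
  moreover have "(norm (A x))\<^sup>2 \<le> (norm A)\<^sup>2"
    using power2_norm_blinfun_le[of A x] x by simp
  ultimately have main: "(norm T)\<^sup>2 - 2 * eps * norm T * (t * norm A) - t\<^sup>2 * (1 + (norm A)\<^sup>2)
      < (norm (T x))\<^sup>2 + 2 * t * ?f"
    using almost power2_norm_blinfun_add_scaleR[of T t A x] mult_left_mono[of "(norm (A x))\<^sup>2" "(norm A)\<^sup>2" "t\<^sup>2"]
    by (simp add: algebra_simps)
  have Tx: "(norm (T x))\<^sup>2 \<le> (norm T)\<^sup>2"
    using power2_norm_blinfun_le[of T x] x by simp
  have "t * (- 2 * eps * norm T * norm A - t * (1 + (norm A)\<^sup>2)) < t * (2 * ?f)"
    using main Tx by (simp add: algebra_simps power2_eq_square)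
  then have "- 2 * eps * norm T * norm A - t * (1 + (norm A)\<^sup>2) < 2 * ?f"
    using t by simp
  moreover have "0 \<le> t * (1 + (norm A)\<^sup>2)" using t by simp
  ultimately show "- eps * norm T * norm A - t * (1 + (norm A)\<^sup>2) \<le> ?f" by linarith
  have "?f \<le> norm (T x) * norm (A x)"
    using Cauchy_Schwarz_ineq2[of "T x" "A x"] by linarith
  also have "\<dots> \<le> norm T * norm A"
    using norm_blinfun[of T x] norm_blinfun[of A x] x by (simp add: mult_mono)
  finally have "t * ?f \<le> t * (norm T * norm A)" using t by simp
  moreover have "(norm T)\<^sup>2 - t * (2 * (1 + eps) * norm T * norm A + t * (1 + (norm A)\<^sup>2))
      = (norm T)\<^sup>2 - 2 * eps * norm T * (t * norm A) - t\<^sup>2 * (1 + (norm A)\<^sup>2) - 2 * (t * (norm T * norm A))"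
    by (simp add: algebra_simps power2_eq_square)
  ultimately show "(norm T)\<^sup>2 - t * (2 * (1 + eps) * norm T * norm A + t * (1 + (norm A)\<^sup>2)) \<le> (norm (T x))\<^sup>2"
    using main by linarith
qed

lemma bj_eps_orth_imp_norm_attain_inner_ge:
  fixes T A :: "'a::{real_inner,complete_space} \<Rightarrow>\<^sub>L 'b::real_inner"
  assumes nontriv: "\<exists>x::'a. x \<noteq> 0" and T: "compact_op T" "norm T > 0"
    and bj: "bj_eps_orth eps T A"
  shows "\<exists>x\<in>norm_attain T. - eps * norm T * norm A \<le> inner (T x) (A x)"
proof -
  define t where "t n = inverse (real (Suc n))" for n
  have t: "0 < t n" for n by (simp add: t_def)
  have t0: "t \<longlonglongrightarrow> 0" unfolding t_def by (rule LIMSEQ_inverse_real_of_nat)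
  have "\<forall>n. \<exists>x. norm x = 1 \<and> (norm (T + t n *\<^sub>R A))\<^sup>2 - (t n)\<^sup>2 < (norm ((T + t n *\<^sub>R A) x))\<^sup>2"
    by (intro allI exists_unit_almost_norming[OF nontriv]) (use t in \<open>simp add: less_imp_neq[symmetric]\<close>)
  then obtain x where x: "\<And>n. norm (x n) = 1"
    and almost: "\<And>n. (norm (T + t n *\<^sub>R A))\<^sup>2 - (t n)\<^sup>2 < (norm ((T + t n *\<^sub>R A) (x n)))\<^sup>2"
    by metis
  note bounds = bj_eps_orth_almost_norming_bounds[OF bj t x almost]
  define K where "K n = 2 * (1 + eps) * norm T * norm A + t n * (1 + (norm A)\<^sup>2)" for n
  have "(\<lambda>n. (norm (T (x n)))\<^sup>2) \<longlonglongrightarrow> (norm T)\<^sup>2"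
  proof (rule tendsto_sandwich)
    show "\<forall>\<^sub>F n in sequentially. (norm T)\<^sup>2 - t n * K n \<le> (norm (T (x n)))\<^sup>2"
      using bounds(2) by (simp add: K_def)
    have "norm (T (x n)) \<le> norm T" for n
      using norm_blinfun[of T "x n"] x[of n] by simp
    then show "\<forall>\<^sub>F n in sequentially. (norm (T (x n)))\<^sup>2 \<le> (norm T)\<^sup>2"
      by (simp add: power_mono)
    show "(\<lambda>n. (norm T)\<^sup>2 - t n * K n) \<longlonglongrightarrow> (norm T)\<^sup>2"
      unfolding K_def by (auto intro!: tendsto_eq_intros t0)
  qed simp
  then have "(\<lambda>n. norm (T (x n))) \<longlonglongrightarrow> norm T"
    using tendsto_real_sqrt by fastforce
  then obtain r z where r: "strict_mono r" and z: "(x \<circ> r) \<longlonglongrightarrow> z" and zM: "z \<in> norm_attain T"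
    using norm_attain_limit_of_norming_sequence[of T x, OF T x] by blast
  have "(\<lambda>n. - eps * norm T * norm A - t (r n) * (1 + (norm A)\<^sup>2))
      \<longlonglongrightarrow> - eps * norm T * norm A - 0 * (1 + (norm A)\<^sup>2)"
    using LIMSEQ_subseq_LIMSEQ[OF t0 r] by (intro tendsto_intros) (simp add: comp_def)
  moreover have "(\<lambda>n. inner (T (x (r n))) (A (x (r n)))) \<longlonglongrightarrow> inner (T z) (A z)"
    using z unfolding comp_def by (intro tendsto_inner blinfun.tendsto[OF tendsto_const])
  ultimately have "- eps * norm T * norm A \<le> inner (T z) (A z)"
    using bounds(1) by (auto intro: LIMSEQ_le)
  then show ?thesis using zM by blast
qed

text \<open>Along the segment from \<open>x\<^sub>1\<close> to \<open>x\<^sub>2\<close>, which stays in the subspace of norming vectors,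
  the form \<open>\<langle>Tx, Ax\<rangle>\<close> has a zero; it is not at the origin, since \<open>x\<^sub>2 = -x\<^sub>1\<close> would give
  both endpoints the same value.\<close>
lemma norm_attain_inner_abs_le:
  fixes T A :: "'a::real_inner \<Rightarrow>\<^sub>L 'b::real_inner"
  assumes x1: "x1 \<in> norm_attain T" and x2: "x2 \<in> norm_attain T" and "0 \<le> c"
    and ge: "- c \<le> inner (T x1) (A x1)" and le: "inner (T x2) (A x2) \<le> c"
  shows "\<exists>x\<in>norm_attain T. \<bar>inner (T x) (A x)\<bar> \<le> c"
proof (cases "\<bar>inner (T x1) (A x1)\<bar> \<le> c \<or> \<bar>inner (T x2) (A x2)\<bar> \<le> c")
  case False
  then have pos: "c < inner (T x1) (A x1)" and neg: "inner (T x2) (A x2) < - c"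
    using ge le by auto
  define v where "v s = (1 - s) *\<^sub>R x1 + s *\<^sub>R x2" for s :: real
  define q where "q x = inner (T x) (A x)" for x
  have "continuous_on {0..1} (\<lambda>s. - q (v s))"
    unfolding q_def v_def by (intro continuous_intros)
  moreover have "- q (v 0) \<le> 0" "0 \<le> - q (v 1)"
    using pos neg \<open>0 \<le> c\<close> by (auto simp: q_def v_def)
  ultimately obtain s where s: "0 \<le> s" "s \<le> 1" "q (v s) = 0"
    using IVT'[of "\<lambda>s. - q (v s)" 0 0 1] by auto
  have unit: "norm x1 = 1" "norm x2 = 1" using x1 x2 by (auto simp: norm_attain_def)
  have "v s \<noteq> 0"
  proof
    assume "v s = 0"
    then have "(1 - s) *\<^sub>R x1 = - (s *\<^sub>R x2)" by (simp add: v_def eq_neg_iff_add_eq_0)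
    then have "norm ((1 - s) *\<^sub>R x1) = norm (s *\<^sub>R x2)" by (metis norm_minus_cancel)
    then have "1 - s = s" using unit s by simp
    then have half: "s = 1 / 2" by simp
    have "v (1 / 2) = 0" using \<open>v s = 0\<close> unfolding half .
    then have "(1 / 2) *\<^sub>R (x1 + x2) = 0" by (simp add: v_def scaleR_add_right)
    then have "x2 = - x1" by (simp add: eq_neg_iff_add_eq_0 add.commute)
    then show False using pos neg \<open>0 \<le> c\<close> by (simp add: blinfun.minus_right)
  qed
  let ?S = "{x. norm (T x) = norm T * norm x}"
  have "x1 \<in> ?S" "x2 \<in> ?S" using x1 x2 by (simp_all add: norm_attain_def)
  then have "v s \<in> ?S"
    unfolding v_def by (intro subspace_add subspace_scale subspace_norm_attaining)
  then have "norm (T (v s)) = norm T * norm (v s)" by simp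
  then have "v s /\<^sub>R norm (v s) \<in> norm_attain T"
    using \<open>v s \<noteq> 0\<close> by (rule normalize_mem_norm_attain)
  moreover have "q (v s /\<^sub>R norm (v s)) = 0"
    using s(3) by (simp add: q_def blinfun.scaleR_right)
  ultimately show ?thesis using \<open>0 \<le> c\<close> unfolding q_def by force
qed (use x1 x2 in blast)

lemma bj_eps_orth_uminus_right: "bj_eps_orth eps u (- v) \<longleftrightarrow> bj_eps_orth eps u v"
  unfolding bj_eps_orth_def
proof (intro iffI allI)
  fix t :: real
  assume "\<forall>t. (norm u)\<^sup>2 - 2 * eps * norm u * norm (t *\<^sub>R - v) \<le> (norm (u + t *\<^sub>R - v))\<^sup>2"
  from this[rule_format, of "- t"]
  show "(norm u)\<^sup>2 - 2 * eps * norm u * norm (t *\<^sub>R v) \<le> (norm (u + t *\<^sub>R v))\<^sup>2" by simp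
next
  fix t :: real
  assume "\<forall>t. (norm u)\<^sup>2 - 2 * eps * norm u * norm (t *\<^sub>R v) \<le> (norm (u + t *\<^sub>R v))\<^sup>2"
  from this[rule_format, of "- t"]
  show "(norm u)\<^sup>2 - 2 * eps * norm u * norm (t *\<^sub>R - v) \<le> (norm (u + t *\<^sub>R - v))\<^sup>2" by simp
qed

lemma norm_attain_zero:
  fixes x :: "'a::real_normed_vector"
  assumes "x \<noteq> 0"
  shows "x /\<^sub>R norm x \<in> norm_attain (0 :: 'a \<Rightarrow>\<^sub>L 'b::real_normed_vector)"
  using assms by (simp add: norm_attain_def)

lemma bj_eps_orth_imp_inner_eps_orth_at_norm_attain:
  fixes T A :: "'a::{real_inner,complete_space} \<Rightarrow>\<^sub>L 'b::real_inner"
  assumes nontriv: "\<exists>x::'a. x \<noteq> 0" and "0 \<le> eps" and "compact_op T"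
    and sub: "norm_attain T \<subseteq> norm_attain A" and bj: "bj_eps_orth eps T A"
  shows "\<exists>x\<in>norm_attain T. inner_eps_orth eps (T x) (A x)"
proof (cases "T = 0")
  case True
  obtain x0 :: 'a where "x0 \<noteq> 0" using nontriv by blast
  then show ?thesis
    using norm_attain_zero[OF \<open>x0 \<noteq> 0\<close>] True by (auto simp: inner_eps_orth_def)
next
  case False
  then have T: "compact_op T" "norm T > 0" using \<open>compact_op T\<close> by auto
  obtain x1 where x1: "x1 \<in> norm_attain T" "- eps * norm T * norm A \<le> inner (T x1) (A x1)"
    using bj_eps_orth_imp_norm_attain_inner_ge[OF nontriv T bj] by blast
  obtain x2 where x2: "x2 \<in> norm_attain T" "- eps * norm T * norm (- A) \<le> inner (T x2) ((- A) x2)"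
    using bj_eps_orth_imp_norm_attain_inner_ge[OF nontriv T] bj bj_eps_orth_uminus_right by blast
  have "0 \<le> eps * norm T * norm A" using \<open>0 \<le> eps\<close> by simp
  then obtain x where x: "x \<in> norm_attain T" "\<bar>inner (T x) (A x)\<bar> \<le> eps * norm T * norm A"
    using norm_attain_inner_abs_le[OF x1(1) x2(1)] x1(2) x2(2)
    by (auto simp: uminus_blinfun.rep_eq)
  moreover have "norm (T x) = norm T" "norm (A x) = norm A"
    using x(1) sub by (auto simp: norm_attain_def)
  ultimately have "inner_eps_orth eps (T x) (A x)" by (simp add: inner_eps_orth_def)
  then show ?thesis using x(1) by blast
qed

lemma inner_eps_orth_at_norm_attain_imp_bj_eps_orth:
  fixes T A :: "'a::real_normed_vector \<Rightarrow>\<^sub>L 'b::real_inner"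
  assumes "x \<in> norm_attain T" "x \<in> norm_attain A" and orth: "inner_eps_orth eps (T x) (A x)"
  shows "bj_eps_orth eps T A"
  unfolding bj_eps_orth_def
proof
  fix t :: real
  let ?f = "inner (T x) (A x)"
  have norms: "norm x = 1" "norm (T x) = norm T" "norm (A x) = norm A"
    using assms by (auto simp: norm_attain_def)
  have "- (t * ?f) \<le> \<bar>t\<bar> * \<bar>?f\<bar>" by (simp add: abs_mult[symmetric])
  also have "\<dots> \<le> \<bar>t\<bar> * (eps * norm T * norm A)"
    using orth norms by (intro mult_left_mono) (auto simp: inner_eps_orth_def)
  finally have "- (t * ?f) \<le> \<bar>t\<bar> * (eps * norm T * norm A)" .
  moreover have "(norm ((T + t *\<^sub>R A) x))\<^sup>2 = (norm T)\<^sup>2 + 2 * t * ?f + t\<^sup>2 * (norm A)\<^sup>2"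
    using norms by (simp add: power2_norm_blinfun_add_scaleR)
  moreover have "2 * eps * norm T * norm (t *\<^sub>R A) = 2 * (\<bar>t\<bar> * (eps * norm T * norm A))"
    by simp
  moreover have "0 \<le> t\<^sup>2 * (norm A)\<^sup>2" by simp
  ultimately have "(norm T)\<^sup>2 - 2 * eps * norm T * norm (t *\<^sub>R A) \<le> (norm ((T + t *\<^sub>R A) x))\<^sup>2"
    by linarith
  also have "\<dots> \<le> (norm (T + t *\<^sub>R A))\<^sup>2"
    using norm_blinfun[of "T + t *\<^sub>R A" x] norms by (simp add: power_mono)
  finally show "(norm T)\<^sup>2 - 2 * eps * norm T * norm (t *\<^sub>R A) \<le> (norm (T + t *\<^sub>R A))\<^sup>2" .
qed

theorem mainTheorem5:
  fixes T A :: "'a::{real_inner, complete_space} \<Rightarrow>\<^sub>L 'a"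
    and eps :: real
  assumes nontriv: "\<exists>x::'a. x \<noteq> 0"
    and eps: "0 \<le> eps" "eps < 1"
    and cT: "compact_op T"
    and sub: "norm_attain T \<subseteq> norm_attain A"
  shows "bj_eps_orth eps T A \<longleftrightarrow>
         (\<exists>x\<in>norm_attain T. inner_eps_orth eps (blinfun_apply T x) (blinfun_apply A x))"
  using bj_eps_orth_imp_inner_eps_orth_at_norm_attain[OF nontriv eps(1) cT sub]
    inner_eps_orth_at_norm_attain_imp_bj_eps_orth sub by blast

end
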